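(* Let $N\ge 0$ be an integer, let $\mathcal{H}_N$ be a complex inner-product space of dimension $N+1$ with orthonormal basis $|\Psi_0\rangle,\dots,|\Psi_N\rangle$, and let $\beta_0,\dots,\beta_{N-1}>0$ be real numbers, with $\beta_N=0$. Let $\hat A$ be the linear operator on $\mathcal{H}_N$ defined by $\hat A|\Psi_0\rangle=0$ and $\hat A|\Psi_{n+1}\rangle=\sqrt{\beta_n}\,|\Psi_n\rangle$ for $0\le n\le N-1$, with adjoint $\hat A^\dagger$ (so $\hat A^\dagger|\Psi_n\rangle=\sqrt{\beta_n}|\Psi_{n+1}\rangle$, $\hat A^\dagger|\Psi_N\rangle=0$). For $0\le n\le N$ define $g^{(0)}_n=1$ and, for $l\ge 1$, $$g^{(l)}_n=\sum_{s_1=0}^{n}\beta_{s_1}\sum_{s_2=0}^{s_1+1}\beta_{s_2}\cdots\sum_{s_l=0}^{s_{l-1}+1}\beta_{s_l},$$ equivalently by the recursion $g^{(l)}_n=\sum_{s=0}^{n}\beta_s\,g^{(l-1)}_{s+1}$ (with $g^{(l-1)}_{N+1}$ multiplying $\beta_N=0$). Then for every real $\tau$, $$e^{-i\tau(\hat A+\hat A^\dagger)}|\Psi_0\rangle=\sum_{n=0}^{N}\gamma_n(\tau)\,(-i\hat A^\dagger)^n|\Psi_0\rangle,\qquad \gamma_n(\tau)=\sum_{l=0}^{\infty}\frac{(-1)^l\,\tau^{n+2l}}{(n+2l)!}\,g^{(l)}_n .$$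
   Context: This describes the time evolution (interaction picture, dimensionless time $\tau$) of the state $|\Psi_0\rangle$ annihilated by the ladder operator $\hat A$, within a finite-dimensional invariant subspace on which the interaction Hamiltonian equals $\hat A+\hat A^\dagger$. Convention: $\beta_s=0$ for $s\ge N$. *)

theory Defs
  imports Complex_Main
begin

text \<open>The space H_N is modelled as coordinate vectors  nat \<Rightarrow> complex  w.r.t. the
orthonormal basis Psi_0,...,Psi_N; coordinate n is the coefficient of Psi_n,
coordinates n > N are unused (always 0 for the vectors considered).\<close>

definition basis0 :: "nat \<Rightarrow> complex" where
  "basis0 = (\<lambda>n. if n = 0 then 1 else 0)"

definition ladderA :: "nat \<Rightarrow> (nat \<Rightarrow> real) \<Rightarrow> (nat \<Rightarrow> complex) \<Rightarrow> nat \<Rightarrow> complex" where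
  "ladderA N \<beta> v = (\<lambda>n. if n < N then complex_of_real (sqrt (\<beta> n)) * v (Suc n) else 0)"

definition ladderAdag :: "nat \<Rightarrow> (nat \<Rightarrow> real) \<Rightarrow> (nat \<Rightarrow> complex) \<Rightarrow> nat \<Rightarrow> complex" where
  "ladderAdag N \<beta> v = (\<lambda>n. if 1 \<le> n \<and> n \<le> N then complex_of_real (sqrt (\<beta> (n - 1))) * v (n - 1) else 0)"

definition hamil :: "nat \<Rightarrow> (nat \<Rightarrow> real) \<Rightarrow> (nat \<Rightarrow> complex) \<Rightarrow> nat \<Rightarrow> complex" where
  "hamil N \<beta> v = (\<lambda>n. ladderA N \<beta> v n + ladderAdag N \<beta> v n)"

definition evol :: "((nat \<Rightarrow> complex) \<Rightarrow> nat \<Rightarrow> complex) \<Rightarrow> real \<Rightarrow> (nat \<Rightarrow> complex) \<Rightarrow> nat \<Rightarrow> complex" where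
  "evol H \<tau> v = (\<lambda>m. \<Sum>k. ((- \<i> * complex_of_real \<tau>) ^ k / of_nat (fact k)) * (H ^^ k) v m)"

fun gcoef :: "(nat \<Rightarrow> real) \<Rightarrow> nat \<Rightarrow> nat \<Rightarrow> real" where
  "gcoef \<beta> 0 n = 1"
| "gcoef \<beta> (Suc l) n = (\<Sum>s = 0..n. \<beta> s * gcoef \<beta> l (Suc s))"

definition gamma_coef :: "(nat \<Rightarrow> real) \<Rightarrow> nat \<Rightarrow> real \<Rightarrow> real" where
  "gamma_coef \<beta> n \<tau> = (\<Sum>l. (-1) ^ l * \<tau> ^ (n + 2 * l) / fact (n + 2 * l) * gcoef \<beta> l n)"

end

theory Submission
  imports Defs
begin

(* In the unnormalised basis e_n = (A^dagger)^n Psi_0 = ladder_norm beta n * Psi_n the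
   Hamiltonian A + A^dagger becomes the real operator w |-> (m |-> beta_m w_(m+1) + w_(m-1))
   (hamil_coords).  The m-th coordinate of its k-th power applied to e_0 vanishes unless
   k = m + 2l, in which case it is g^(l)_m: this is exactly the recursion defining g.
   Collecting the terms k = m + 2l of the exponential series therefore yields
   (-i)^m gamma_m(tau) e_m = gamma_m(tau) (-i A^dagger)^m Psi_0, and the series for gamma_m
   converges absolutely since |g^(l)_n| <= (sum_s |beta_s|)^l. *)

definition ladder_norm :: "(nat \<Rightarrow> real) \<Rightarrow> nat \<Rightarrow> real" where
  "ladder_norm \<beta> n = (\<Prod>k<n. sqrt (\<beta> k))"

lemma ladder_norm_0 [simp]: "ladder_norm \<beta> 0 = 1"
  by (simp add: ladder_norm_def)

lemma ladder_norm_Suc: "ladder_norm \<beta> (Suc n) = ladder_norm \<beta> n * sqrt (\<beta> n)"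
  by (simp add: ladder_norm_def)

lemma ladder_norm_eq_0:
  assumes "\<beta> N = 0" "N < n"
  shows "ladder_norm \<beta> n = 0"
  using assms by (auto simp: ladder_norm_def)

definition hamil_coords :: "(nat \<Rightarrow> real) \<Rightarrow> (nat \<Rightarrow> real) \<Rightarrow> nat \<Rightarrow> real" where
  "hamil_coords \<beta> w m = \<beta> m * w (Suc m) + (if m = 0 then 0 else w (m - 1))"

lemma hamil_ladder_norm_scaled:
  assumes nonneg: "\<forall>n < N. 0 \<le> \<beta> n" and top: "\<beta> N = 0"
  shows "hamil N \<beta> (\<lambda>m. of_real (ladder_norm \<beta> m * w m))
       = (\<lambda>m. of_real (ladder_norm \<beta> m * hamil_coords \<beta> w m))"
proof
  fix m
  consider "m < N" | "m = N" | "N < m" by linarith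
  then show "hamil N \<beta> (\<lambda>m. of_real (ladder_norm \<beta> m * w m)) m
       = of_real (ladder_norm \<beta> m * hamil_coords \<beta> w m)"
  proof cases
    case 1
    then have "sqrt (\<beta> m) * sqrt (\<beta> m) = \<beta> m" using nonneg by simp
    with 1 show ?thesis
      by (cases m) (auto simp: hamil_def ladderA_def ladderAdag_def hamil_coords_def
          ladder_norm_Suc algebra_simps simp flip: of_real_mult)
  next
    case 2
    with top have "\<beta> m = 0" by simp
    with 2 show ?thesis
      by (cases m) (auto simp: hamil_def ladderA_def ladderAdag_def hamil_coords_def
          ladder_norm_Suc algebra_simps)
  next
    case 3
    then show ?thesis
      by (simp add: hamil_def ladderA_def ladderAdag_def ladder_norm_eq_0[of \<beta> N, OF top])
  qed
qed

lemma hamil_pow_ladder_norm_scaled: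
  assumes "\<forall>n < N. 0 \<le> \<beta> n" and "\<beta> N = 0"
  shows "(hamil N \<beta> ^^ k) (\<lambda>m. of_real (ladder_norm \<beta> m * w m))
       = (\<lambda>m. of_real (ladder_norm \<beta> m * (hamil_coords \<beta> ^^ k) w m))"
  by (induction k) (simp_all add: hamil_ladder_norm_scaled[OF assms] del: of_real_mult)

lemma basis0_ladder_norm_scaled:
  "basis0 = (\<lambda>m. of_real (ladder_norm \<beta> m * (if m = 0 then 1 else 0)))"
  by (auto simp: basis0_def)

lemma gcoef_Suc_eq:
  "gcoef \<beta> (Suc l) m = \<beta> m * gcoef \<beta> l (Suc m) + (if m = 0 then 0 else gcoef \<beta> (Suc l) (m - 1))"
  by (cases m) simp_all

lemma hamil_coords_pow_delta0:
  "(hamil_coords \<beta> ^^ k) (\<lambda>n. if n = 0 then 1 else 0) m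
     = (if m \<le> k \<and> even (k - m) then gcoef \<beta> ((k - m) div 2) m else 0)"
proof (induction k arbitrary: m)
  case 0
  then show ?case by simp
next
  case (Suc k)
  let ?W = "(hamil_coords \<beta> ^^ k) (\<lambda>n. if n = 0 then 1 else 0)"
  have step: "(hamil_coords \<beta> ^^ Suc k) (\<lambda>n. if n = 0 then 1 else 0) j
      = \<beta> j * ?W (Suc j) + (if j = 0 then 0 else ?W (j - 1))" for j
    by (simp add: hamil_coords_def)
  consider "m = Suc k" | "m \<le> k" "odd (k - m)" | "\<not> (m \<le> Suc k \<and> even (Suc k - m))"
    by (cases "m \<le> k"; cases "even k = even m") (auto simp: Suc_diff_le le_Suc_eq)
  then show ?case
  proof cases
    case 1
    then show ?thesis by (simp add: step Suc.IH del: funpow.simps)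
  next
    case 2
    from \<open>odd (k - m)\<close> obtain l where "k - m = 2 * l + 1" by (rule oddE)
    with 2 have "(Suc k - m) div 2 = Suc l" "k - Suc m = 2 * l" "k - (m - 1) = 2 * Suc l \<or> m = 0"
      by auto
    with 2 show ?thesis
      by (auto simp: step Suc.IH gcoef_Suc_eq[of \<beta> l m] simp del: gcoef.simps funpow.simps)
  next
    case 3
    then have "\<not> (Suc m \<le> k \<and> even (k - Suc m))" "m = 0 \<or> \<not> (m - 1 \<le> k \<and> even (k - (m - 1)))"
      by auto
    with 3 show ?thesis by (auto simp: step Suc.IH simp del: funpow.simps)
  qed
qed

lemma neg_i_ladderAdag_pow_basis0:
  "((\<lambda>v j. - \<i> * ladderAdag N \<beta> v j) ^^ n) basis0 m
     = (if m = n \<and> n \<le> N then (- \<i>) ^ n * of_real (ladder_norm \<beta> n) else 0)"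
proof (induction n arbitrary: m)
  case 0
  then show ?case by (simp add: basis0_def)
next
  case (Suc n)
  then show ?case
    by (cases m) (auto simp: ladderAdag_def ladder_norm_Suc mult_ac)
qed

lemma abs_gcoef_le:
  assumes "summable (\<lambda>s. \<bar>\<beta> s\<bar>)"
  shows "\<bar>gcoef \<beta> l n\<bar> \<le> (\<Sum>s. \<bar>\<beta> s\<bar>) ^ l"
proof (induction l arbitrary: n)
  case 0
  then show ?case by simp
next
  case (Suc l)
  let ?S = "\<Sum>s. \<bar>\<beta> s\<bar>"
  have "0 \<le> ?S" using assms by (simp add: suminf_nonneg)
  have "\<bar>gcoef \<beta> (Suc l) n\<bar> \<le> (\<Sum>s = 0..n. \<bar>\<beta> s\<bar> * \<bar>gcoef \<beta> l (Suc s)\<bar>)"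
    by (simp add: sum_abs[THEN order_trans] abs_mult)
  also have "\<dots> \<le> (\<Sum>s = 0..n. \<bar>\<beta> s\<bar>) * ?S ^ l"
    by (simp add: sum_distrib_right sum_mono mult_left_mono Suc.IH)
  also have "\<dots> \<le> ?S * ?S ^ l"
    using assms \<open>0 \<le> ?S\<close> by (intro mult_right_mono sum_le_suminf) auto
  finally show ?case by simp
qed

lemma summable_gamma_series:
  assumes "summable (\<lambda>s. \<bar>\<beta> s\<bar>)"
  shows "summable (\<lambda>l. (-1) ^ l * \<tau> ^ (n + 2 * l) / fact (n + 2 * l) * gcoef \<beta> l n)"
proof (rule summable_comparison_test)
  let ?S = "\<Sum>s. \<bar>\<beta> s\<bar>"
  show "summable (\<lambda>l. \<bar>\<tau>\<bar> ^ n * (inverse (fact l) * (\<tau>\<^sup>2 * ?S) ^ l))"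
    by (intro summable_mult summable_exp)
  show "\<exists>L. \<forall>l\<ge>L. norm ((-1) ^ l * \<tau> ^ (n + 2 * l) / fact (n + 2 * l) * gcoef \<beta> l n)
      \<le> \<bar>\<tau>\<bar> ^ n * (inverse (fact l) * (\<tau>\<^sup>2 * ?S) ^ l)"
  proof (intro exI allI impI)
    fix l
    have "0 \<le> ?S" using assms by (simp add: suminf_nonneg)
    have "norm ((-1) ^ l * \<tau> ^ (n + 2 * l) / fact (n + 2 * l) * gcoef \<beta> l n)
        = \<bar>\<tau>\<bar> ^ n * (\<tau>\<^sup>2) ^ l * \<bar>gcoef \<beta> l n\<bar> / fact (n + 2 * l)"
      by (simp add: abs_mult power_abs power_add power_mult)
    also have "\<dots> \<le> \<bar>\<tau>\<bar> ^ n * (\<tau>\<^sup>2) ^ l * ?S ^ l / fact l"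
      using abs_gcoef_le[OF assms] \<open>0 \<le> ?S\<close>
      by (intro frac_le mult_left_mono) (auto intro: fact_mono)
    finally show "norm ((-1) ^ l * \<tau> ^ (n + 2 * l) / fact (n + 2 * l) * gcoef \<beta> l n)
        \<le> \<bar>\<tau>\<bar> ^ n * (inverse (fact l) * (\<tau>\<^sup>2 * ?S) ^ l)"
      by (simp add: field_simps)
  qed
qed

lemma hamil_coords_exp_series_sums:
  assumes "summable (\<lambda>s. \<bar>\<beta> s\<bar>)"
  shows "(\<lambda>k. (- \<i> * of_real \<tau>) ^ k / of_nat (fact k)
            * of_real ((hamil_coords \<beta> ^^ k) (\<lambda>n. if n = 0 then 1 else 0) m))
         sums ((- \<i>) ^ m * of_real (gamma_coef \<beta> m \<tau>))"
    (is "?f sums _")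
proof -
  let ?r = "\<lambda>l. (-1) ^ l * \<tau> ^ (m + 2 * l) / fact (m + 2 * l) * gcoef \<beta> l m"
  have mono: "strict_mono (\<lambda>l. m + 2 * l)"
    by (rule strict_monoI) simp
  have off_range: "?f k = 0" if "k \<notin> range (\<lambda>l. m + 2 * l)" for k
  proof -
    have "k \<noteq> m + 2 * ((k - m) div 2)"
      using that by blast
    then have "\<not> (m \<le> k \<and> even (k - m))"
      by presburger
    then have "(hamil_coords \<beta> ^^ k) (\<lambda>n. if n = 0 then 1 else 0) m = 0"
      unfolding hamil_coords_pow_delta0 by (rule if_not_P)
    then show ?thesis
      by simp
  qed
  have on_range: "?f (m + 2 * l) = (- \<i>) ^ m * of_real (?r l)" for l
  proof -
    have "(- \<i>) ^ (m + 2 * l) = (- \<i>) ^ m * ((- \<i>)\<^sup>2) ^ l"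
      by (simp only: power_add power_mult)
    then have "(- \<i> * of_real \<tau>) ^ (m + 2 * l) = (- \<i>) ^ m * (-1) ^ l * of_real (\<tau> ^ (m + 2 * l))"
      by (simp only: power_mult_distrib of_real_power power2_minus power2_i)
    then show ?thesis
      by (simp add: hamil_coords_pow_delta0)
  qed
  have "?r sums gamma_coef \<beta> m \<tau>"
    using summable_gamma_series[OF assms] by (simp add: gamma_coef_def summable_sums)
  then have "(\<lambda>l. ?f (m + 2 * l)) sums ((- \<i>) ^ m * of_real (gamma_coef \<beta> m \<tau>))"
    unfolding on_range by (intro sums_mult sums_of_real)
  then show ?thesis
    using sums_mono_reindex[of "\<lambda>l. m + 2 * l" ?f, OF mono off_range] by simp
qed

theorem corollary1:
  fixes N :: nat and \<beta> :: "nat \<Rightarrow> real" and \<tau> :: real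
  assumes "\<forall>n < N. \<beta> n > 0"
    and "\<forall>s \<ge> N. \<beta> s = 0"
  shows "evol (hamil N \<beta>) \<tau> basis0 =
    (\<lambda>m. \<Sum>n = 0..N. complex_of_real (gamma_coef \<beta> n \<tau>) *
          (((\<lambda>v. (\<lambda>j. - \<i> * ladderAdag N \<beta> v j)) ^^ n) basis0) m)"
proof
  fix m
  have nonneg: "\<forall>n < N. 0 \<le> \<beta> n" and top: "\<beta> N = 0"
    using assms by (auto simp: less_imp_le)
  have summable: "summable (\<lambda>s. \<bar>\<beta> s\<bar>)"
    by (rule summable_finite[of "{..<N}"]) (use assms(2) in auto)
  have "evol (hamil N \<beta>) \<tau> basis0 m
      = (\<Sum>k. of_real (ladder_norm \<beta> m) * ((- \<i> * of_real \<tau>) ^ k / of_nat (fact k)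
            * of_real ((hamil_coords \<beta> ^^ k) (\<lambda>n. if n = 0 then 1 else 0) m)))"
    unfolding evol_def basis0_ladder_norm_scaled[of \<beta>] hamil_pow_ladder_norm_scaled[OF nonneg top]
    by (simp only: of_real_mult mult_ac)
  also have "\<dots> = of_real (ladder_norm \<beta> m) * ((- \<i>) ^ m * of_real (gamma_coef \<beta> m \<tau>))"
    by (rule sums_unique[symmetric], rule sums_mult)
      (rule hamil_coords_exp_series_sums[OF summable])
  also have "\<dots> = (\<Sum>n = 0..N. of_real (gamma_coef \<beta> n \<tau>) *
          (((\<lambda>v. (\<lambda>j. - \<i> * ladderAdag N \<beta> v j)) ^^ n) basis0) m)"
    unfolding neg_i_ladderAdag_pow_basis0 using ladder_norm_eq_0[of \<beta> N m, OF top]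
    by (cases "m \<le> N") (simp_all add: if_distrib[of "(*) _"] cong: if_cong)
  finally show "evol (hamil N \<beta>) \<tau> basis0 m = (\<Sum>n = 0..N. of_real (gamma_coef \<beta> n \<tau>) *
          (((\<lambda>v. (\<lambda>j. - \<i> * ladderAdag N \<beta> v j)) ^^ n) basis0) m)" .
qed

end
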